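(* Consider the three-gambler game $\Gamma_3(\mathbf{p},K)$ described in the context, and a stationary strategy profile $\mathbf{x}$ such that $\lim_{t\to\infty}\Pi^t(\mathbf{x})$ exists. Choose an arbitrary vector $\mathbf{U}_1^{(0)}\in\mathbb{R}^{N_K}$ and define $$\mathbf{U}_1^{(t+1)}=\widetilde{\Pi}_1(\mathbf{x})\mathbf{U}_1^{(t)}+\mathbf{b}_1,\qquad t=0,1,2,\dots$$ Then this iteration converges, and $\overline{\mathbf{U}}=\lim_{t\to\infty}\mathbf{U}_1^{(t)}$ is a solution of the payoff system $\mathbf{V}_1=\widetilde{\Pi}_1(\mathbf{x})\mathbf{V}_1+\mathbf{b}_1$.
   Context: The game $\Gamma_3(\mathbf{p},K)$ has three players $P_1,P_2,P_3$, parameters $\mathbf{p}=(p_1,p_2,p_3)\in(0,1)^3$ and an integer $K\ge3$. States. The state set is $S=\{(s_1,s_2,s_3)\in\mathbb{Z}_{\ge0}^3:s_1+s_2+s_3=K\}$, with $N_K=|S|=(K+1)(K+2)/2$. States are numbered so that the first three are $(K,0,0)$, $(0,K,0)$ and $(0,0,K)$; these terminal states are absorbing. Dynamics. In each round a player $P_n$ is selected equiprobably among those with positive capital. He selects another player $P_m$ with positive capital and wins one unit from $P_m$ with probability $p_{nm}$, otherwise pays one unit to $P_m$. Here $p_{12}=p_1$, $p_{21}=1-p_1$, $p_{23}=p_2$, $p_{32}=1-p_2$, $p_{31}=p_3$, $p_{13}=1-p_3$. Strategies. A stationary strategy profile $\mathbf{x}=(x_1(\mathbf{s}),x_2(\mathbf{s}),x_3(\mathbf{s}))_{\mathbf{s}\in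 S}$ gives, at each state: - the probability $x_1(\mathbf{s})$ that $P_1$ picks $P_2$ (else $P_3$); - the probability $x_2(\mathbf{s})$ that $P_2$ picks $P_3$ (else $P_1$); - the probability $x_3(\mathbf{s})$ that $P_3$ picks $P_1$ (else $P_2$). When two players remain, each picks the other. $\Pi(\mathbf{x})=(\pi_{i,j})$ is the transition matrix of the induced Markov chain on $S$. Matrices. $\widetilde{\Pi}_1(\mathbf{x})$ is the $N_K\times N_K$ matrix whose first three rows are zero and whose rows $4,\dots,N_K$ coincide with those of $\Pi(\mathbf{x})$. $\mathbf{b}_1=(1,0,0,\dots,0)^T\in\mathbb{R}^{N_K}$. *)

theory Defs
  imports Complex_Main
begin

text \<open>States of the game: capitals (s1,s2,s3) of the three players.\<close>
type_synonym state = "nat \<times> nat \<times> nat"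

definition states :: "nat \<Rightarrow> state set" where
  "states K = {(a,b,c). a + b + c = K}"

definition terminal_states :: "nat \<Rightarrow> state set" where
  "terminal_states K = {(K,0,0), (0,K,0), (0,0,K)}"

definition cap :: "state \<Rightarrow> nat \<Rightarrow> nat" where
  "cap s n = (case s of (a,b,c) \<Rightarrow> if n = 1 then a else if n = 2 then b else c)"

definition active :: "state \<Rightarrow> nat set" where
  "active s = {n \<in> {1,2,3}. 0 < cap s n}"

definition transfer :: "state \<Rightarrow> nat \<Rightarrow> nat \<Rightarrow> state" where
  "transfer s n m = (case s of (a,b,c) \<Rightarrow>
     (a + of_bool (n = 1) - of_bool (m = 1),
      b + of_bool (n = 2) - of_bool (m = 2),
      c + of_bool (n = 3) - of_bool (m = 3)))"

definition pwin :: "(nat \<Rightarrow> real) \<Rightarrow> nat \<Rightarrow> nat \<Rightarrow> real" where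
  "pwin p n m =
     (if n = 1 \<and> m = 2 then p 1 else if n = 2 \<and> m = 1 then 1 - p 1
      else if n = 2 \<and> m = 3 then p 2 else if n = 3 \<and> m = 2 then 1 - p 2
      else if n = 3 \<and> m = 1 then p 3 else if n = 1 \<and> m = 3 then 1 - p 3
      else 0)"

text \<open>Preferred opponent encoded by x_n: P1 picks P2, P2 picks P3, P3 picks P1.\<close>
definition pref :: "nat \<Rightarrow> nat" where
  "pref n = (if n = 1 then 2 else if n = 2 then 3 else 1)"

definition choose_prob :: "(nat \<Rightarrow> state \<Rightarrow> real) \<Rightarrow> state \<Rightarrow> nat \<Rightarrow> nat \<Rightarrow> real" where
  "choose_prob x s n m =
     (if card (active s) = 3 then
        (if m = pref n then x n s else if m \<noteq> n then 1 - x n s else 0)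
      else (if m \<noteq> n \<and> m \<in> active s then 1 else 0))"

definition Pi :: "(nat \<Rightarrow> real) \<Rightarrow> (nat \<Rightarrow> state \<Rightarrow> real) \<Rightarrow> state \<Rightarrow> state \<Rightarrow> real" where
  "Pi p x s s' =
     (if card (active s) \<le> 1 then (if s' = s then 1 else 0)
      else (\<Sum>n\<in>active s. \<Sum>m\<in>active s - {n}.
              (1 / real (card (active s))) * choose_prob x s n m *
              (pwin p n m * of_bool (s' = transfer s n m)
               + (1 - pwin p n m) * of_bool (s' = transfer s m n))))"

fun Pi_pow :: "(nat \<Rightarrow> real) \<Rightarrow> (nat \<Rightarrow> state \<Rightarrow> real) \<Rightarrow> nat \<Rightarrow> nat \<Rightarrow> state \<Rightarrow> state \<Rightarrow> real" where
  "Pi_pow p x K 0 s s' = of_bool (s = s')"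
| "Pi_pow p x K (Suc t) s s' = (\<Sum>r\<in>states K. Pi_pow p x K t s r * Pi p x r s')"

definition Pi_tilde :: "(nat \<Rightarrow> real) \<Rightarrow> (nat \<Rightarrow> state \<Rightarrow> real) \<Rightarrow> nat \<Rightarrow> state \<Rightarrow> state \<Rightarrow> real" where
  "Pi_tilde p x K s s' = (if s \<in> terminal_states K then 0 else Pi p x s s')"

definition b1 :: "nat \<Rightarrow> state \<Rightarrow> real" where
  "b1 K s = (if s = (K,0,0) then 1 else 0)"

end

theory Submission
  imports Defs
begin

text \<open>The terminal rows of \<open>\<Pi>\<close> are identity rows, and from \<open>t = 1\<close> on the iterate
  \<open>U(t)\<close> agrees with \<open>b\<^sub>1\<close> on the terminal states, while \<open>b\<^sub>1\<close> vanishes elsewhere. So the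
  affine iteration turns into the Markov iteration \<open>U(t+2) = \<Pi> U(t+1)\<close>, whence
  \<open>U(t+1) = \<Pi>\<^sup>t U(1)\<close> converges because \<open>\<Pi>\<^sup>t\<close> does; passing to the limit in the recursion
  shows that the limit solves the payoff system.\<close>

lemma finite_states: "finite (states K)"
proof (rule finite_subset)
  show "states K \<subseteq> {0..K} \<times> {0..K} \<times> {0..K}" by (auto simp: states_def)
qed auto

lemma card_active_terminal_le_1:
  assumes "0 < K" "s \<in> terminal_states K"
  shows "card (active s) \<le> 1"
proof -
  from assms(2) consider "s = (K,0,0)" | "s = (0,K,0)" | "s = (0,0,K)"
    by (auto simp: terminal_states_def)
  then have "\<exists>n. active s = {n}"
  proof cases
    case 1 with assms(1) have "active s = {1}" by (auto simp: active_def cap_def)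
    then show ?thesis ..
  next
    case 2 with assms(1) have "active s = {2}" by (auto simp: active_def cap_def)
    then show ?thesis ..
  next
    case 3 with assms(1) have "active s = {3}" by (auto simp: active_def cap_def)
    then show ?thesis ..
  qed
  then show ?thesis by auto
qed

lemma Pi_terminal_row:
  assumes "0 < K" "s \<in> terminal_states K"
  shows "Pi p x s s' = of_bool (s' = s)"
  using card_active_terminal_le_1[OF assms] by (simp add: Pi_def)

lemma Pi_pow_Suc_left:
  assumes "s \<in> states K" "s' \<in> states K"
  shows "Pi_pow p x K (Suc t) s s' = (\<Sum>r\<in>states K. Pi p x s r * Pi_pow p x K t r s')"
  using assms(2)
proof (induction t arbitrary: s')
  case 0
  show ?case using finite_states assms(1) 0 by simp
next
  case (Suc t)
  have "Pi_pow p x K (Suc (Suc t)) s s'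
      = (\<Sum>r\<in>states K. (\<Sum>q\<in>states K. Pi p x s q * Pi_pow p x K t q r) * Pi p x r s')"
    using Suc by simp
  also have "\<dots> = (\<Sum>q\<in>states K. Pi p x s q * (\<Sum>r\<in>states K. Pi_pow p x K t q r * Pi p x r s'))"
    unfolding sum_distrib_left sum_distrib_right mult.assoc by (rule sum.swap)
  finally show ?case by simp
qed

context
  fixes p :: "nat \<Rightarrow> real" and K :: nat
    and x :: "nat \<Rightarrow> state \<Rightarrow> real"
    and U :: "nat \<Rightarrow> state \<Rightarrow> real"
  assumes K_pos: "0 < K"
    and iter: "\<And>t s. s \<in> states K \<Longrightarrow>
                 U (Suc t) s = (\<Sum>s'\<in>states K. Pi_tilde p x K s s' * U t s') + b1 K s"
begin

lemma payoff_iteration_Suc_Suc: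
  assumes s: "s \<in> states K"
  shows "U (Suc (Suc t)) s = (\<Sum>s'\<in>states K. Pi p x s s' * U (Suc t) s')"
proof (cases "s \<in> terminal_states K")
  case True
  have "(\<Sum>s'\<in>states K. Pi p x s s' * U (Suc t) s') = U (Suc t) s"
    using finite_states s by (simp add: Pi_terminal_row[OF K_pos True])
  also have "\<dots> = b1 K s" using iter[OF s, of t] True by (simp add: Pi_tilde_def)
  also have "\<dots> = U (Suc (Suc t)) s" using iter[OF s, of "Suc t"] True by (simp add: Pi_tilde_def)
  finally show ?thesis by simp
next
  case False
  then have "b1 K s = 0" by (auto simp: b1_def terminal_states_def)
  then show ?thesis using iter[OF s, of "Suc t"] False by (simp add: Pi_tilde_def)
qed

lemma payoff_iteration_eq_Pi_pow:
  assumes "s \<in> states K"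
  shows "U (Suc t) s = (\<Sum>s'\<in>states K. Pi_pow p x K t s s' * U 1 s')"
  using assms
proof (induction t arbitrary: s)
  case 0
  then show ?case using finite_states by simp
next
  case (Suc t)
  have "U (Suc (Suc t)) s
      = (\<Sum>r\<in>states K. Pi p x s r * (\<Sum>s'\<in>states K. Pi_pow p x K t r s' * U 1 s'))"
    unfolding payoff_iteration_Suc_Suc[OF Suc.prems] by (simp add: Suc.IH)
  also have "\<dots> = (\<Sum>s'\<in>states K. (\<Sum>r\<in>states K. Pi p x s r * Pi_pow p x K t r s') * U 1 s')"
    unfolding sum_distrib_left sum_distrib_right mult.assoc by (rule sum.swap)
  also have "\<dots> = (\<Sum>s'\<in>states K. Pi_pow p x K (Suc t) s s' * U 1 s')"
    using Pi_pow_Suc_left[OF Suc.prems] by (intro sum.cong) auto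
  finally show ?case .
qed

lemma payoff_iteration_convergent:
  assumes lim_exists: "\<And>s'. s' \<in> states K \<Longrightarrow> convergent (\<lambda>t. Pi_pow p x K t s s')"
    and s: "s \<in> states K"
  shows "convergent (\<lambda>t. U t s)"
proof -
  have "(\<lambda>t. \<Sum>s'\<in>states K. Pi_pow p x K t s s' * U 1 s')
          \<longlonglongrightarrow> (\<Sum>s'\<in>states K. lim (\<lambda>t. Pi_pow p x K t s s') * U 1 s')"
    using lim_exists by (intro tendsto_sum tendsto_mult_right) (simp add: convergent_LIMSEQ_iff)
  then have "convergent (\<lambda>t. U (Suc t) s)"
    unfolding convergent_def payoff_iteration_eq_Pi_pow[OF s] by blast
  then show ?thesis using convergent_Suc_iff[of "\<lambda>t. U t s"] by blast
qed

end

theorem proposition4: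
  fixes p :: "nat \<Rightarrow> real" and K :: nat
    and x :: "nat \<Rightarrow> state \<Rightarrow> real"
    and U :: "nat \<Rightarrow> state \<Rightarrow> real"
  assumes p_range: "\<forall>i\<in>{1,2,3}. 0 < p i \<and> p i < 1"
    and K_ge: "K \<ge> 3"
    and x_range: "\<forall>n\<in>{1,2,3}. \<forall>s\<in>states K. 0 \<le> x n s \<and> x n s \<le> 1"
    and lim_exists: "\<forall>s\<in>states K. \<forall>s'\<in>states K. convergent (\<lambda>t. Pi_pow p x K t s s')"
    and iter: "\<forall>t. \<forall>s\<in>states K.
                 U (Suc t) s = (\<Sum>s'\<in>states K. Pi_tilde p x K s s' * U t s') + b1 K s"
  shows "\<exists>Ubar :: state \<Rightarrow> real.
           (\<forall>s\<in>states K. (\<lambda>t. U t s) \<longlonglongrightarrow> Ubar s) \<and>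
           (\<forall>s\<in>states K. Ubar s = (\<Sum>s'\<in>states K. Pi_tilde p x K s s' * Ubar s') + b1 K s)"
proof -
  define Ubar where "Ubar s = lim (\<lambda>t. U t s)" for s
  have K_pos: "0 < K" using K_ge by simp
  have conv: "(\<lambda>t. U t s) \<longlonglongrightarrow> Ubar s" if s: "s \<in> states K" for s
    using payoff_iteration_convergent[where p = p and x = x and U = U,
        OF K_pos iter[rule_format] lim_exists[rule_format, OF s] s]
    by (simp add: Ubar_def convergent_LIMSEQ_iff)
  have "Ubar s = (\<Sum>s'\<in>states K. Pi_tilde p x K s s' * Ubar s') + b1 K s"
    if s: "s \<in> states K" for s
  proof (rule LIMSEQ_unique)
    show "(\<lambda>t. U (Suc t) s) \<longlonglongrightarrow> Ubar s" using conv[OF s] by (rule LIMSEQ_Suc)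
    show "(\<lambda>t. U (Suc t) s) \<longlonglongrightarrow> (\<Sum>s'\<in>states K. Pi_tilde p x K s s' * Ubar s') + b1 K s"
      unfolding iter[rule_format, OF s] using conv by (intro tendsto_intros) auto
  qed
  with conv show ?thesis by blast
qed

end
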